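(* For every $n\geq 1$ and every $w\in\{0,1\}^n$, there is a prenex first-order sentence over $\tau_{\mathsf{string}}$ with $3\lceil \log_3 n\rceil$ quantifiers, whose quantifier prefix consists of $\lceil\log_3 n\rceil$ consecutive blocks $\exists\exists\forall$, that is true in $\mathbf{B}_w$ and false in $\mathbf{B}_{w'}$ for every $w'\in\{0,1\}^n\setminus\{w\}$.
   Context: Vocabulary $\tau_{\mathsf{string}}=\langle <, S;\ \mathsf{min},\mathsf{max}\rangle$ with $<$ binary, $S$ unary, $\mathsf{min},\mathsf{max}$ constants. A string $w=w_1\cdots w_n\in\{0,1\}^n$ ($n\geq 1$) is encoded by the structure $\mathbf{B}_w$ with universe $\{1,\dots,n\}$, $<$ the usual order, $S=\{i: w_i=1\}$, $\mathsf{min}=1$, $\mathsf{max}=n$. The number of quantifiers is the number of quantifier occurrences. *)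

theory Defs
  imports Complex_Main
begin

datatype trm = Var nat | Min | Max

datatype fm =
    FTrue | FFalse
  | Less trm trm | Eq trm trm | S trm
  | Neg fm | And fm fm | Or fm fm
  | Ex nat fm | All nat fm

fun tvars :: "trm \<Rightarrow> nat set" where
  "tvars (Var x) = {x}" | "tvars Min = {}" | "tvars Max = {}"

fun free :: "fm \<Rightarrow> nat set" where
  "free FTrue = {}" | "free FFalse = {}"
| "free (Less a b) = tvars a \<union> tvars b"
| "free (Eq a b) = tvars a \<union> tvars b"
| "free (S a) = tvars a"
| "free (Neg p) = free p"
| "free (And p q) = free p \<union> free q"
| "free (Or p q) = free p \<union> free q"
| "free (Ex x p) = free p - {x}"
| "free (All x p) = free p - {x}"

fun qfree :: "fm \<Rightarrow> bool" where
  "qfree (Ex x p) = False" | "qfree (All x p) = False"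
| "qfree (Neg p) = qfree p"
| "qfree (And p q) = (qfree p \<and> qfree q)"
| "qfree (Or p q) = (qfree p \<and> qfree q)"
| "qfree _ = True"

fun nquant :: "fm \<Rightarrow> nat" where
  "nquant (Ex x p) = Suc (nquant p)" | "nquant (All x p) = Suc (nquant p)"
| "nquant (Neg p) = nquant p"
| "nquant (And p q) = nquant p + nquant q"
| "nquant (Or p q) = nquant p + nquant q"
| "nquant _ = 0"

text \<open>String w = w_1...w_n as a bool list (True = 1); structure B_w has universe {1..n},
  S = {i. w_i = 1}, min = 1, max = n.\<close>

fun teval :: "bool list \<Rightarrow> (nat \<Rightarrow> nat) \<Rightarrow> trm \<Rightarrow> nat" where
  "teval w v (Var x) = v x" | "teval w v Min = 1" | "teval w v Max = length w"

fun holds :: "bool list \<Rightarrow> (nat \<Rightarrow> nat) \<Rightarrow> fm \<Rightarrow> bool" where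
  "holds w v FTrue = True" | "holds w v FFalse = False"
| "holds w v (Less a b) = (teval w v a < teval w v b)"
| "holds w v (Eq a b) = (teval w v a = teval w v b)"
| "holds w v (S a) = (1 \<le> teval w v a \<and> teval w v a \<le> length w \<and> w ! (teval w v a - 1))"
| "holds w v (Neg p) = (\<not> holds w v p)"
| "holds w v (And p q) = (holds w v p \<and> holds w v q)"
| "holds w v (Or p q) = (holds w v p \<or> holds w v q)"
| "holds w v (Ex x p) = (\<exists>i\<in>{1..length w}. holds w (v(x := i)) p)"
| "holds w v (All x p) = (\<forall>i\<in>{1..length w}. holds w (v(x := i)) p)"

text \<open>Truth of a sentence in B_w (the assignment is irrelevant for sentences).\<close>
definition models :: "bool list \<Rightarrow> fm \<Rightarrow> bool" where
  "models w p = holds w (\<lambda>_. 1) p"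

definition sentence :: "fm \<Rightarrow> bool" where
  "sentence p \<longleftrightarrow> free p = {}"

fun add_prefix :: "(bool \<times> nat) list \<Rightarrow> fm \<Rightarrow> fm" where
  "add_prefix [] p = p"
| "add_prefix ((True, x) # qs) p = Ex x (add_prefix qs p)"
| "add_prefix ((False, x) # qs) p = All x (add_prefix qs p)"

definition prenex_with_prefix :: "bool list \<Rightarrow> fm \<Rightarrow> bool" where
  "prenex_with_prefix qk phi \<longleftrightarrow>
     (\<exists>qs m. qfree m \<and> map fst qs = qk \<and> phi = add_prefix qs m)"

end

(*
  A string is pinned down by its first and last letter together with the claim that the
  positions min and max enclose its inner word. Call such a claim, "the positions a and b
  enclose the word u", a gap. One block EX x EX y ALL z reduces a gap whose word has fewer
  than 3^(j+1) letters to gaps with fewer than 3^j letters: x and y are placed on two letters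
  of u, cutting it into three shorter words, and z selects which of the three gaps is still to
  be checked (z <= x, x < z <= y, or z > y). The guards recording these selections are mutually
  exclusive, so after any number of blocks at most one gap is active and a single block serves
  all gaps of a level at once. An empty piece creates no new gap, since the same z witnesses
  that nothing lies strictly between its ends; hence ceil(log_3 n) blocks suffice.
*)

theory Submission
  imports Defs
begin

abbreviation Imp :: "fm \<Rightarrow> fm \<Rightarrow> fm" where
  "Imp p q \<equiv> Or (Neg p) q"

definition Letter :: "bool \<Rightarrow> trm \<Rightarrow> fm" where
  "Letter c t = (if c then S t else Neg (S t))"

abbreviation Between :: "trm \<Rightarrow> trm \<Rightarrow> trm \<Rightarrow> fm" where
  "Between a z b \<equiv> And (Less a z) (Less z b)"

fun Ands :: "fm list \<Rightarrow> fm" where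
  "Ands [] = FTrue"
| "Ands (p # ps) = And p (Ands ps)"

lemma holds_Letter [simp]:
  "holds w v (Letter c t) \<longleftrightarrow> (1 \<le> teval w v t \<and> teval w v t \<le> length w \<and> w ! (teval w v t - 1)) = c"
  by (simp add: Letter_def)

lemma free_Letter [simp]: "free (Letter c t) = tvars t"
  by (simp add: Letter_def)

lemma qfree_Letter [simp]: "qfree (Letter c t)"
  by (simp add: Letter_def)

lemma holds_Ands [simp]: "holds w v (Ands ps) \<longleftrightarrow> (\<forall>p\<in>set ps. holds w v p)"
  by (induction ps) auto

lemma free_Ands [simp]: "free (Ands ps) = (\<Union>p\<in>set ps. free p)"
  by (induction ps) auto

lemma qfree_Ands [simp]: "qfree (Ands ps) \<longleftrightarrow> (\<forall>p\<in>set ps. qfree p)"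
  by (induction ps) auto

lemma teval_cong: "(\<And>x. x \<in> tvars t \<Longrightarrow> v x = v' x) \<Longrightarrow> teval w v t = teval w v' t"
  by (cases t) auto

lemma holds_cong: "(\<And>x. x \<in> free p \<Longrightarrow> v x = v' x) \<Longrightarrow> holds w v p = holds w v' p"
proof (induction p arbitrary: v v')
  case (Less a b)
  then show ?case using teval_cong[of a v v' w] teval_cong[of b v v' w] by auto
next
  case (Eq a b)
  then show ?case using teval_cong[of a v v' w] teval_cong[of b v v' w] by auto
next
  case (S a)
  then show ?case using teval_cong[of a v v' w] by auto
next
  case (Neg p)
  then show ?case by (metis free.simps(6) holds.simps(6))
next
  case (And p q)
  then show ?case by (metis UnCI free.simps(7) holds.simps(7))
next
  case (Or p q)
  then show ?case by (metis UnCI free.simps(8) holds.simps(8))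
next
  case (Ex x p)
  have "holds w (v(x := i)) p = holds w (v'(x := i)) p" for i
    by (rule Ex.IH) (use Ex.prems in auto)
  then show ?case by simp
next
  case (All x p)
  have "holds w (v(x := i)) p = holds w (v'(x := i)) p" for i
    by (rule All.IH) (use All.prems in auto)
  then show ?case by simp
qed simp_all

lemma teval_upd_fresh:
  "tvars t \<inter> {x1, x2, x3} = {} \<Longrightarrow> teval w (v(x1 := X1, x2 := X2, x3 := X3)) t = teval w v t"
  by (rule teval_cong) auto

lemma holds_upd_fresh:
  "free p \<inter> {x1, x2, x3} = {} \<Longrightarrow> holds w (v(x1 := X1, x2 := X2, x3 := X3)) p = holds w v p"
  by (rule holds_cong) auto

lemma teval_in_range: "\<forall>x. v x \<in> {1..length w} \<Longrightarrow> teval w v t \<in> {1..length w}"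
  by (cases t) force+

lemma nquant_add_prefix: "qfree m \<Longrightarrow> nquant (add_prefix qs m) = length qs"
proof (induction qs)
  case Nil
  then show ?case by (induction m) auto
next
  case (Cons q qs)
  then show ?case by (cases q; cases "fst q") auto
qed

lemma nquant_prenex: "prenex_with_prefix qk phi \<Longrightarrow> nquant phi = length qk"
  unfolding prenex_with_prefix_def using nquant_add_prefix by force

section \<open>Words between two positions\<close>

lemma drop_take_split:
  assumes "p < r" "r < q" "q \<le> length w"
  shows "drop p (take (q - 1) w) = drop p (take (r - 1) w) @ w ! (r - 1) # drop r (take (q - 1) w)"
proof -
  have "take (q - 1) w = take (r - 1) w @ drop (r - 1) (take (q - 1) w)"
    using assms by (metis append_take_drop_id min.absorb1 diff_le_mono less_imp_le take_take)
  also have "drop (r - 1) (take (q - 1) w) = take (q - 1) w ! (r - 1) # drop (Suc (r - 1)) (take (q - 1) w)"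
    using assms by (intro Cons_nth_drop_Suc[symmetric]) simp
  also have "Suc (r - 1) = r"
    using assms by simp
  finally have "drop p (take (q - 1) w) =
      drop p (take (r - 1) w @ take (q - 1) w ! (r - 1) # drop r (take (q - 1) w))"
    by (rule arg_cong)
  also have "\<dots> = drop p (take (r - 1) w) @ w ! (r - 1) # drop r (take (q - 1) w)"
    using assms by simp
  finally show ?thesis .
qed

text \<open>Positions are 1-based, so the letters strictly between positions p and q of w
  are w ! p, \<dots>, w ! (q - 2).\<close>

definition spells :: "bool list \<Rightarrow> nat \<Rightarrow> nat \<Rightarrow> bool list \<Rightarrow> bool" where
  "spells w p q u \<longleftrightarrow> p < q \<and> q \<le> length w \<and> drop p (take (q - 1) w) = u"

lemma spells_length: "spells w p q u \<Longrightarrow> q = p + length u + 1"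
  unfolding spells_def by auto

lemma spells_Nil: "spells w p q [] \<longleftrightarrow> q = p + 1 \<and> q \<le> length w"
  unfolding spells_def by auto

lemma spells_Nil_if_nothing_between:
  assumes "p < q" "q \<le> length w" "\<forall>z\<in>{1..length w}. \<not> (p < z \<and> z < q)"
  shows "spells w p q []"
  using assms(3)[rule_format, of "p + 1"] assms(1,2) by (auto simp: spells_Nil)

lemma spells_append_Cons:
  assumes "r = p + length u1 + 1"
  shows "spells w p q (u1 @ c # u2) \<longleftrightarrow> spells w p r u1 \<and> w ! (r - 1) = c \<and> spells w r q u2"
proof
  assume u: "spells w p q (u1 @ c # u2)"
  then have "p < r" "r < q" "q \<le> length w"
    using assms spells_length[OF u] by (auto simp: spells_def)
  moreover from this have "drop p (take (r - 1) w) @ w ! (r - 1) # drop r (take (q - 1) w) = u1 @ c # u2"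
    using u drop_take_split[OF calculation] by (simp add: spells_def)
  moreover have "length (drop p (take (r - 1) w)) = length u1"
    using assms calculation by simp
  ultimately show "spells w p r u1 \<and> w ! (r - 1) = c \<and> spells w r q u2"
    by (simp add: spells_def)
next
  assume "spells w p r u1 \<and> w ! (r - 1) = c \<and> spells w r q u2"
  then show "spells w p q (u1 @ c # u2)"
    using assms drop_take_split[of p r q w] by (auto simp: spells_def)
qed

lemma spells_append3:
  assumes "x = p + length u1 + 1" "y = x + length u2 + 1"
  shows "spells w p q (u1 @ c1 # u2 @ c2 # u3) \<longleftrightarrow>
    spells w p x u1 \<and> w ! (x - 1) = c1 \<and> spells w x y u2 \<and> w ! (y - 1) = c2 \<and> spells w y q u3"
  using spells_append_Cons[OF assms(1)] spells_append_Cons[OF assms(2)] by simp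

lemma spells_inner: "spells w 1 (length w) u \<longleftrightarrow> 2 \<le> length w \<and> u = butlast (tl w)"
proof -
  have "drop 1 (take (length w - 1) w) = butlast (tl w)"
    by (simp add: butlast_conv_take drop_Suc tl_take)
  then show ?thesis
    unfolding spells_def by auto
qed

lemma word_cases:
  obtains "u = []" | c where "u = [c]" | c d r where "u = c # d # r"
  by (metis list.exhaust)

lemma take_nth_take_nth_drop:
  assumes "i + k + 2 \<le> length u"
  shows "take i u @ u ! i # take k (drop (i + 1) u) @ u ! (i + 1 + k) # drop (i + k + 2) u = u"
proof -
  have "drop (i + 1) u = take k (drop (i + 1) u) @ u ! (i + 1 + k) # drop (i + k + 2) u"
    using assms id_take_nth_drop[of k "drop (i + 1) u"] by (simp add: add.commute add.left_commute)
  then show ?thesis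
    using assms id_take_nth_drop[of i u] by simp
qed

lemma list_eq_by_ends:
  assumes "length xs = length ys" "xs \<noteq> []" "hd xs = hd ys" "last xs = last ys" "butlast (tl xs) = butlast (tl ys)"
  shows "xs = ys"
  using assms by (metis append_butlast_last_id last_tl length_0_conv length_tl list.expand)

section \<open>Gaps and the block formulas\<close>

datatype gap = Gap (gap_guard: fm) trm trm (gap_word: "bool list")

fun gap_vars :: "gap \<Rightarrow> nat set" where
  "gap_vars (Gap G a b u) = free G \<union> tvars a \<union> tvars b"

lemma free_gap_guard: "free (gap_guard g) \<subseteq> gap_vars g"
  by (cases g) auto

fun gap_holds :: "bool list \<Rightarrow> (nat \<Rightarrow> nat) \<Rightarrow> gap \<Rightarrow> bool" where
  "gap_holds w v (Gap G a b u) \<longleftrightarrow> (holds w v G \<longrightarrow> spells w (teval w v a) (teval w v b) u)"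

lemma gap_holds_if_not_guard: "\<not> holds w v (gap_guard g) \<Longrightarrow> gap_holds w v g"
  by (cases g) auto

definition sub_gap :: "fm \<Rightarrow> fm \<Rightarrow> trm \<Rightarrow> trm \<Rightarrow> trm \<Rightarrow> bool list \<Rightarrow> fm \<times> gap list" where
  "sub_gap G R p q z u =
    (if u = [] then (Imp G (Neg (Between p z q)), []) else (FTrue, [Gap (And G R) p q u]))"

definition pieces :: "nat \<Rightarrow> bool list \<Rightarrow> bool list \<times> bool \<times> bool list \<times> bool \<times> bool list" where
  "pieces m u = (let l1 = min (length u - 2) m; l2 = min (length u - 2 - l1) m
    in (take l1 u, u ! l1, take l2 (drop (l1 + 1) u), u ! (l1 + 1 + l2), drop (l1 + l2 + 2) u))"

lemma pieces_append:
  assumes "2 \<le> length u" "pieces m u = (u1, c1, u2, c2, u3)"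
  shows "u = u1 @ c1 # u2 @ c2 # u3"
  using assms take_nth_take_nth_drop[of "min (length u - 2) m" "min (length u - 2 - min (length u - 2) m) m" u]
  by (auto simp: pieces_def Let_def)

lemma pieces_length:
  assumes "length u \<le> 3 * m + 2" "pieces m u = (u1, c1, u2, c2, u3)"
  shows "length u1 \<le> m" "length u2 \<le> m" "length u3 \<le> m"
  using assms by (auto simp: pieces_def Let_def)

text \<open>The conjunct x < z of the third guard follows from y < z and x < y, but stating it makes
  the three guards exclusive outright.\<close>

definition split_long ::
    "nat \<Rightarrow> fm \<Rightarrow> trm \<Rightarrow> trm \<Rightarrow> bool list \<Rightarrow> bool \<Rightarrow> bool list \<Rightarrow> bool \<Rightarrow> bool list \<Rightarrow> fm \<times> gap list" where
  "split_long j G a b u1 c1 u2 c2 u3 =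
    (let x = Var (3*j); y = Var (3*j+1); z = Var (3*j+2);
         s1 = sub_gap G (Neg (Less x z)) a x z u1;
         s2 = sub_gap G (And (Less x z) (Neg (Less y z))) x y z u2;
         s3 = sub_gap G (And (Less x z) (Less y z)) y b z u3
     in (Ands [Imp G (Ands [Less a x, Less x y, Less y b, Letter c1 x, Letter c2 y]), fst s1, fst s2, fst s3],
         snd s1 @ snd s2 @ snd s3))"

fun split_gap :: "nat \<Rightarrow> gap \<Rightarrow> fm \<times> gap list" where
  "split_gap j (Gap G a b []) = (Imp G (And (Less a b) (Neg (Between a (Var (3*j+2)) b))), [])"
| "split_gap j (Gap G a b [c]) =
    (let x = Var (3*j); z = Var (3*j+2)
     in (Imp G (Ands [Less a x, Less x b, Letter c x, Neg (Between a z x), Neg (Between x z b)]), []))"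
| "split_gap j (Gap G a b (c # d # r)) =
    (case pieces (3^j - 1) (c # d # r) of (u1, c1, u2, c2, u3) \<Rightarrow> split_long j G a b u1 c1 u2 c2 u3)"

fun split_points :: "nat \<Rightarrow> bool list \<Rightarrow> (nat \<Rightarrow> nat) \<Rightarrow> gap \<Rightarrow> nat \<times> nat" where
  "split_points j w v (Gap G a b (c # d # r)) =
    (case pieces (3^j - 1) (c # d # r) of (u1, c1, u2, c2, u3) \<Rightarrow>
      (teval w v a + length u1 + 1, teval w v a + length u1 + length u2 + 2))"
| "split_points j w v (Gap G a b u) = (teval w v a + 1, teval w v a + 1)"

definition sub_gaps :: "nat \<Rightarrow> gap list \<Rightarrow> gap list" where
  "sub_gaps j gs = concat (map (\<lambda>g. snd (split_gap j g)) gs)"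

definition split_matrix :: "nat \<Rightarrow> gap list \<Rightarrow> fm" where
  "split_matrix j gs = Ands (map (\<lambda>g. fst (split_gap j g)) gs)"

fun blocks_fm :: "nat \<Rightarrow> gap list \<Rightarrow> fm \<Rightarrow> fm" where
  "blocks_fm 0 gs acc = And acc (Ands (map (\<lambda>g. Neg (gap_guard g)) gs))"
| "blocks_fm (Suc j) gs acc = Ex (3*j) (Ex (3*j+1) (All (3*j+2)
    (blocks_fm j (sub_gaps j gs) (And acc (split_matrix j gs)))))"

lemma sub_gap_children:
  "g \<in> set (snd (sub_gap G R p q z u)) \<longleftrightarrow> u \<noteq> [] \<and> g = Gap (And G R) p q u"
  by (auto simp: sub_gap_def)

lemma split_long_children:
  assumes "g \<in> set (snd (split_long j G a b u1 c1 u2 c2 u3))"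
  shows "gap_word g \<in> {u1, u2, u3}" "gap_word g \<noteq> []" "holds w V (gap_guard g) \<Longrightarrow> holds w V G"
  using assms by (auto simp: split_long_def Let_def sub_gap_children)

lemma split_long_children_exclusive:
  assumes "g \<in> set (snd (split_long j G a b u1 c1 u2 c2 u3))" "g' \<in> set (snd (split_long j G a b u1 c1 u2 c2 u3))"
    and "holds w V (gap_guard g)" "holds w V (gap_guard g')"
  shows "g = g'"
  using assms by (auto simp: split_long_def Let_def sub_gap_children)

lemma split_gap_with_children:
  assumes "g' \<in> set (snd (split_gap j g))"
  obtains G a b u u1 c1 u2 c2 u3 where "g = Gap G a b u" "2 \<le> length u"
    "pieces (3^j - 1) u = (u1, c1, u2, c2, u3)" "split_gap j g = split_long j G a b u1 c1 u2 c2 u3"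
proof -
  obtain G a b u where g: "g = Gap G a b u"
    by (cases g)
  then obtain c d r where u: "u = c # d # r"
    using assms by (cases u rule: word_cases) (auto simp: Let_def)
  obtain u1 c1 u2 c2 u3 where p: "pieces (3^j - 1) (c # d # r) = (u1, c1, u2, c2, u3)"
    by (metis prod_cases5)
  show thesis
    by (rule that[of G a b u u1 c1 u2 c2 u3]) (use g u p in simp_all)
qed

lemma split_gap_children:
  assumes "g' \<in> set (snd (split_gap j g))"
  shows "gap_word g' \<noteq> []" "length (gap_word g) < 3 ^ Suc j \<Longrightarrow> length (gap_word g') < 3 ^ j"
    "holds w V (gap_guard g') \<Longrightarrow> holds w V (gap_guard g)"
proof -
  obtain G a b u u1 c1 u2 c2 u3 where g: "g = Gap G a b u" "2 \<le> length u"
      and p: "pieces (3^j - 1) u = (u1, c1, u2, c2, u3)"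
      and split: "split_gap j g = split_long j G a b u1 c1 u2 c2 u3"
    using split_gap_with_children[OF assms] .
  note children = split_long_children[of g' j G a b u1 c1 u2 c2 u3, folded split, OF assms]
  show "gap_word g' \<noteq> []" "holds w V (gap_guard g') \<Longrightarrow> holds w V (gap_guard g)"
    using children g by simp_all
  assume "length (gap_word g) < 3 ^ Suc j"
  moreover have "1 \<le> (3::nat) ^ j"
    by simp
  ultimately have "length u \<le> 3 * (3^j - 1) + 2"
    using g by simp
  moreover have "(3::nat) ^ j - 1 < 3 ^ j"
    by simp
  ultimately have "length u1 < 3^j" "length u2 < 3^j" "length u3 < 3^j"
    using pieces_length[OF _ p] by (meson order.strict_trans1)+
  then show "length (gap_word g') < 3 ^ j"
    using children(1) by auto
qed

lemma split_gap_children_exclusive: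
  assumes "g' \<in> set (snd (split_gap j g))" "g'' \<in> set (snd (split_gap j g))"
    and "holds w V (gap_guard g')" "holds w V (gap_guard g'')"
  shows "g' = g''"
proof -
  obtain G a b u u1 c1 u2 c2 u3 where split: "split_gap j g = split_long j G a b u1 c1 u2 c2 u3"
    by (rule split_gap_with_children[OF assms(1)])
  from assms show ?thesis
    unfolding split by (rule split_long_children_exclusive)
qed

lemma split_gap_qfree:
  "qfree (gap_guard g) \<Longrightarrow> qfree (fst (split_gap j g)) \<and> (\<forall>g'\<in>set (snd (split_gap j g)). qfree (gap_guard g'))"
  by (induction j g rule: split_gap.induct)
    (auto simp: split_long_def sub_gap_def Let_def split: prod.split)

lemma split_gap_vars:
  "free (fst (split_gap j g)) \<union> (\<Union>g'\<in>set (snd (split_gap j g)). gap_vars g') \<subseteq> gap_vars g \<union> {3*j, 3*j+1, 3*j+2}"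
  by (induction j g rule: split_gap.induct)
    (auto simp: split_long_def sub_gap_def Let_def split: prod.split)

lemma sub_gaps_vars:
  "free (split_matrix j gs) \<union> (\<Union>g\<in>set (sub_gaps j gs). gap_vars g)
    \<subseteq> (\<Union>g\<in>set gs. gap_vars g) \<union> {3*j, 3*j+1, 3*j+2}"
proof -
  have "free (split_matrix j gs) \<union> (\<Union>g\<in>set (sub_gaps j gs). gap_vars g) =
      (\<Union>g\<in>set gs. free (fst (split_gap j g)) \<union> (\<Union>g'\<in>set (snd (split_gap j g)). gap_vars g'))"
    by (auto simp: split_matrix_def sub_gaps_def)
  also have "\<dots> \<subseteq> (\<Union>g\<in>set gs. gap_vars g \<union> {3*j, 3*j+1, 3*j+2})"
    by (intro UN_mono subset_refl split_gap_vars)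
  finally show ?thesis by blast
qed

definition vars_at_least :: "nat \<Rightarrow> gap list \<Rightarrow> fm \<Rightarrow> bool" where
  "vars_at_least k gs acc \<longleftrightarrow> free acc \<union> (\<Union>g\<in>set gs. gap_vars g) \<subseteq> {k..}"

lemma vars_at_least_sub_gaps:
  assumes "vars_at_least (3 * Suc j) gs acc"
  shows "vars_at_least (3 * j) (sub_gaps j gs) (And acc (split_matrix j gs))"
proof -
  have "free (And acc (split_matrix j gs)) \<union> (\<Union>g\<in>set (sub_gaps j gs). gap_vars g)
      \<subseteq> free acc \<union> (\<Union>g\<in>set gs. gap_vars g) \<union> {3*j, 3*j+1, 3*j+2}"
    using sub_gaps_vars[of j gs] by auto
  also have "\<dots> \<subseteq> {3*j..}"
    using assms by (auto simp: vars_at_least_def)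
  finally show ?thesis
    unfolding vars_at_least_def .
qed

lemma vars_at_least_block_fresh:
  assumes "vars_at_least (3 * Suc j) gs acc"
  shows "free acc \<inter> {3*j, 3*j+1, 3*j+2} = {}" "g \<in> set gs \<Longrightarrow> gap_vars g \<inter> {3*j, 3*j+1, 3*j+2} = {}"
  using assms unfolding vars_at_least_def by auto

lemma blocks_fm_prenex:
  "qfree acc \<Longrightarrow> \<forall>g\<in>set gs. qfree (gap_guard g) \<Longrightarrow>
    prenex_with_prefix (concat (replicate j [True, True, False])) (blocks_fm j gs acc)"
proof (induction j arbitrary: gs acc)
  case 0
  then show ?case
    unfolding prenex_with_prefix_def by (intro exI[of _ "[]"]) auto
next
  case (Suc j)
  have "qfree (And acc (split_matrix j gs))" "\<forall>g\<in>set (sub_gaps j gs). qfree (gap_guard g)"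
    using Suc.prems split_gap_qfree by (auto simp: split_matrix_def sub_gaps_def)
  then obtain qs m where "qfree m" "map fst qs = concat (replicate j [True, True, False])"
      "blocks_fm j (sub_gaps j gs) (And acc (split_matrix j gs)) = add_prefix qs m"
    using Suc.IH unfolding prenex_with_prefix_def by blast
  then show ?case
    unfolding prenex_with_prefix_def
    by (intro exI[of _ "(True, 3*j) # (True, 3*j+1) # (False, 3*j+2) # qs"] exI[of _ m]) auto
qed

lemma blocks_fm_free: "free (blocks_fm j gs acc) \<subseteq> free acc \<union> (\<Union>g\<in>set gs. gap_vars g)"
proof (induction j arbitrary: gs acc)
  case 0
  then show ?case
    using free_gap_guard by auto
next
  case (Suc j)
  have "free (blocks_fm j (sub_gaps j gs) (And acc (split_matrix j gs)))
      \<subseteq> free acc \<union> free (split_matrix j gs) \<union> (\<Union>g\<in>set (sub_gaps j gs). gap_vars g)"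
    using Suc.IH[of "sub_gaps j gs" "And acc (split_matrix j gs)"] by auto
  also have "\<dots> \<subseteq> free acc \<union> (\<Union>g\<in>set gs. gap_vars g) \<union> {3*j, 3*j+1, 3*j+2}"
    using sub_gaps_vars[of j gs] by blast
  finally show ?case
    unfolding blocks_fm.simps free.simps by blast
qed

section \<open>Soundness\<close>

lemma sub_gap_sound:
  assumes sub: "\<And>Z. Z \<in> {1..length w} \<Longrightarrow> holds w (V Z) (fst (sub_gap G R p q z u)) \<and>
      (\<forall>g\<in>set (snd (sub_gap G R p q z u)). gap_holds w (V Z) g)"
    and fixed: "\<And>Z. teval w (V Z) p = P" "\<And>Z. teval w (V Z) q = Q" "\<And>Z. holds w (V Z) G"
    and z: "\<And>Z. teval w (V Z) z = Z"
    and R: "Z' \<in> {1..length w}" "holds w (V Z') R"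
    and PQ: "P < Q" "Q \<le> length w"
  shows "spells w P Q u"
proof (cases "u = []")
  case True
  have "\<forall>Z\<in>{1..length w}. \<not> (P < Z \<and> Z < Q)"
    using sub fixed z True by (auto simp: sub_gap_def)
  then show ?thesis
    using True PQ spells_Nil_if_nothing_between by blast
next
  case False
  then show ?thesis
    using sub[OF R(1)] R(2) fixed by (auto simp: sub_gap_def)
qed

lemma split_long_sound:
  fixes v :: "nat \<Rightarrow> nat" and j X Y :: nat
  defines "V \<equiv> \<lambda>Z. v(3*j := X, 3*j+1 := Y, 3*j+2 := Z)"
  assumes v: "\<forall>x. v x \<in> {1..length w}"
    and fresh: "(free G \<union> tvars a \<union> tvars b) \<inter> {3*j, 3*j+1, 3*j+2} = {}"
    and G: "holds w v G"
    and split: "\<And>Z. Z \<in> {1..length w} \<Longrightarrow> holds w (V Z) (fst (split_long j G a b u1 c1 u2 c2 u3)) \<and>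
      (\<forall>g\<in>set (snd (split_long j G a b u1 c1 u2 c2 u3)). gap_holds w (V Z) g)"
  shows "spells w (teval w v a) (teval w v b) (u1 @ c1 # u2 @ c2 # u3)"
proof -
  define A B where "A = teval w v a" and "B = teval w v b"
  have fixed: "holds w (V Z) G" "teval w (V Z) a = A" "teval w (V Z) b = B" for Z
    using fresh G by (auto simp: V_def A_def B_def holds_upd_fresh teval_upd_fresh)
  have vars: "teval w (V Z) (Var (3*j)) = X" "teval w (V Z) (Var (3*j+1)) = Y"
      "teval w (V Z) (Var (3*j+2)) = Z" for Z
    by (simp_all add: V_def)
  have n: "1 \<le> length w" "B \<le> length w"
    using v teval_in_range[of v w b] by (auto simp: B_def)
  have order: "A < X" "X < Y" "Y < B" and letters: "w ! (X - 1) = c1" "w ! (Y - 1) = c2"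
    using split[of 1] fixed vars n by (auto simp: split_long_def Let_def)
  have s1: "spells w A X u1"
    by (rule sub_gap_sound[where V = V and Z' = 1])
      (use split fixed vars order n in \<open>auto simp: split_long_def Let_def\<close>)
  have s2: "spells w X Y u2"
    by (rule sub_gap_sound[where V = V and Z' = Y])
      (use split fixed vars order n in \<open>auto simp: split_long_def Let_def\<close>)
  have s3: "spells w Y B u3"
    by (rule sub_gap_sound[where V = V and Z' = "length w"])
      (use split fixed vars order n in \<open>auto simp: split_long_def Let_def\<close>)
  have "X = A + length u1 + 1" "Y = X + length u2 + 1"
    using spells_length[OF s1] spells_length[OF s2] by simp_all
  from spells_append3[OF this] have "spells w A B (u1 @ c1 # u2 @ c2 # u3)"
    using s1 s2 s3 letters by simp
  then show ?thesis
    by (simp add: A_def B_def)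
qed

lemma split_gap_sound:
  fixes v :: "nat \<Rightarrow> nat" and j X Y :: nat
  defines "V \<equiv> \<lambda>Z. v(3*j := X, 3*j+1 := Y, 3*j+2 := Z)"
  assumes v: "\<forall>x. v x \<in> {1..length w}" and fresh: "gap_vars g \<inter> {3*j, 3*j+1, 3*j+2} = {}"
    and split: "\<And>Z. Z \<in> {1..length w} \<Longrightarrow> holds w (V Z) (fst (split_gap j g)) \<and>
      (\<forall>g'\<in>set (snd (split_gap j g)). gap_holds w (V Z) g')"
  shows "gap_holds w v g"
proof -
  obtain G a b u where g: "g = Gap G a b u"
    by (cases g)
  define A B where "A = teval w v a" and "B = teval w v b"
  have fixed: "holds w (V Z) G = holds w v G" "teval w (V Z) a = A" "teval w (V Z) b = B" for Z
    using fresh by (auto simp: g V_def A_def B_def holds_upd_fresh teval_upd_fresh)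
  have AB: "A \<in> {1..length w}" "B \<in> {1..length w}"
    using teval_in_range[OF v] by (simp_all add: A_def B_def)
  have "spells w A B u" if G: "holds w v G"
  proof (cases u rule: word_cases)
    case 1
    then have "A < B" "\<forall>Z\<in>{1..length w}. \<not> (A < Z \<and> Z < B)"
      using split[of 1] split fixed G AB by (auto simp: g V_def Let_def)
    then show ?thesis
      using 1 AB spells_Nil_if_nothing_between by auto
  next
    case (2 c)
    have at: "A < X \<and> X < B \<and> \<not> (A < Z \<and> Z < X) \<and> \<not> (X < Z \<and> Z < B)"
      if "Z \<in> {1..length w}" for Z
      using split[OF that] fixed G by (simp add: g 2 V_def Let_def)
    moreover have "w ! (X - 1) = c"
      using split[of 1] at[of 1] fixed G AB by (auto simp: g 2 V_def Let_def)
    ultimately have pieces: "spells w A X [] \<and> w ! (X - 1) = c \<and> spells w X B []"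
      using at[of 1] AB spells_Nil_if_nothing_between by auto
    then have "X = A + length ([] :: bool list) + 1"
      using spells_length[of w A X "[]"] by simp
    from spells_append_Cons[OF this, of w B c "[]"] show ?thesis
      using pieces 2 by simp
  next
    case (3 c d r)
    obtain u1 c1 u2 c2 u3 where p: "pieces (3^j - 1) (c # d # r) = (u1, c1, u2, c2, u3)"
      by (metis prod_cases5)
    have "spells w A B (u1 @ c1 # u2 @ c2 # u3)"
      unfolding A_def B_def
      by (rule split_long_sound[OF v _ G, where j = j and X = X and Y = Y])
        (use fresh split p in \<open>simp_all add: g 3 V_def\<close>)
    then show ?thesis
      using pieces_append[OF _ p] 3 by simp
  qed
  then show ?thesis
    by (simp add: g A_def B_def)
qed

lemma blocks_fm_sound:
  "\<forall>x. v x \<in> {1..length w} \<Longrightarrow> vars_at_least (3 * j) gs acc \<Longrightarrow> holds w v (blocks_fm j gs acc) \<Longrightarrow>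
    holds w v acc \<and> (\<forall>g\<in>set gs. gap_holds w v g)"
proof (induction j arbitrary: v gs acc)
  case 0
  then show ?case
    using gap_holds_if_not_guard by auto
next
  case (Suc j)
  let ?V = "\<lambda>X Y Z. v(3*j := X, 3*j+1 := Y, 3*j+2 := Z)"
  obtain X Y where XY: "X \<in> {1..length w}" "Y \<in> {1..length w}"
    and all: "\<And>Z. Z \<in> {1..length w} \<Longrightarrow>
      holds w (?V X Y Z) (blocks_fm j (sub_gaps j gs) (And acc (split_matrix j gs)))"
    using Suc.prems(3) by auto
  have IH: "holds w (?V X Y Z) (And acc (split_matrix j gs)) \<and> (\<forall>g\<in>set (sub_gaps j gs). gap_holds w (?V X Y Z) g)"
    if Z: "Z \<in> {1..length w}" for Z
    by (rule Suc.IH[OF _ vars_at_least_sub_gaps[OF Suc.prems(2)] all[OF Z]]) (use Suc.prems(1) XY Z in auto)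
  have "holds w v acc"
    using IH[of 1] XY holds_upd_fresh[OF vars_at_least_block_fresh(1)[OF Suc.prems(2)]] by auto
  moreover have "gap_holds w v g" if g: "g \<in> set gs" for g
    by (rule split_gap_sound[OF Suc.prems(1) vars_at_least_block_fresh(2)[OF Suc.prems(2) g], where X = X and Y = Y])
      (use IH g in \<open>auto simp: split_matrix_def sub_gaps_def\<close>)
  ultimately show ?case
    by blast
qed

section \<open>Completeness\<close>

lemma sub_gap_complete:
  assumes "holds w V G \<Longrightarrow> spells w (teval w V p) (teval w V q) u"
  shows "holds w V (fst (sub_gap G R p q z u)) \<and> (\<forall>g\<in>set (snd (sub_gap G R p q z u)). gap_holds w V g)"
  using assms by (auto simp: sub_gap_def spells_Nil)

lemma split_long_complete:
  fixes v :: "nat \<Rightarrow> nat" and j X Y Z :: nat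
  defines "V \<equiv> v(3*j := X, 3*j+1 := Y, 3*j+2 := Z)"
  assumes fresh: "(free G \<union> tvars a \<union> tvars b) \<inter> {3*j, 3*j+1, 3*j+2} = {}"
    and spells: "holds w v G \<Longrightarrow> spells w (teval w v a) (teval w v b) (u1 @ c1 # u2 @ c2 # u3) \<and>
      X = teval w v a + length u1 + 1 \<and> Y = X + length u2 + 1"
  shows "holds w V (fst (split_long j G a b u1 c1 u2 c2 u3)) \<and>
    (\<forall>g\<in>set (snd (split_long j G a b u1 c1 u2 c2 u3)). gap_holds w V g)"
proof -
  define A B where "A = teval w v a" and "B = teval w v b"
  have fixed: "holds w V G = holds w v G" "teval w V a = A" "teval w V b = B"
    using fresh by (auto simp: V_def A_def B_def holds_upd_fresh teval_upd_fresh)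
  have vars: "teval w V (Var (3*j)) = X" "teval w V (Var (3*j+1)) = Y" "teval w V (Var (3*j+2)) = Z"
    by (simp_all add: V_def)
  have pieces: "spells w A X u1 \<and> w ! (X - 1) = c1 \<and> spells w X Y u2 \<and> w ! (Y - 1) = c2 \<and> spells w Y B u3"
    if "holds w V G"
    using spells that spells_append3[of X A u1 Y u2] by (simp add: fixed A_def B_def)
  then have order: "A < X \<and> X < Y \<and> Y < B \<and> B \<le> length w" if "holds w V G"
    using that by (auto simp: spells_def)
  have "holds w V (Imp G (Ands [Less a (Var (3*j)), Less (Var (3*j)) (Var (3*j+1)), Less (Var (3*j+1)) b,
      Letter c1 (Var (3*j)), Letter c2 (Var (3*j+1))]))"
    using fixed vars pieces order by auto
  moreover have "holds w V (fst (sub_gap G R a (Var (3*j)) z u1)) \<and>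
      (\<forall>g\<in>set (snd (sub_gap G R a (Var (3*j)) z u1)). gap_holds w V g)" for R z
    by (rule sub_gap_complete) (use pieces vars in \<open>simp add: fixed\<close>)
  moreover have "holds w V (fst (sub_gap G R (Var (3*j)) (Var (3*j+1)) z u2)) \<and>
      (\<forall>g\<in>set (snd (sub_gap G R (Var (3*j)) (Var (3*j+1)) z u2)). gap_holds w V g)" for R z
    by (rule sub_gap_complete) (use pieces vars in \<open>simp add: fixed\<close>)
  moreover have "holds w V (fst (sub_gap G R (Var (3*j+1)) b z u3)) \<and>
      (\<forall>g\<in>set (snd (sub_gap G R (Var (3*j+1)) b z u3)). gap_holds w V g)" for R z
    by (rule sub_gap_complete) (use pieces vars in \<open>simp add: fixed\<close>)
  ultimately show ?thesis
    unfolding split_long_def Let_def by (simp add: ball_Un)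
qed

lemma split_gap_complete:
  fixes v :: "nat \<Rightarrow> nat" and j X Y Z :: nat
  defines "V \<equiv> v(3*j := X, 3*j+1 := Y, 3*j+2 := Z)"
  assumes fresh: "gap_vars g \<inter> {3*j, 3*j+1, 3*j+2} = {}" and ok: "gap_holds w v g"
    and XY: "holds w v (gap_guard g) \<Longrightarrow> (X, Y) = split_points j w v g"
  shows "holds w V (fst (split_gap j g)) \<and> (\<forall>g'\<in>set (snd (split_gap j g)). gap_holds w V g')"
proof -
  obtain G a b u where g: "g = Gap G a b u"
    by (cases g)
  define A B where "A = teval w v a" and "B = teval w v b"
  have fixed: "holds w V G = holds w v G" "teval w V a = A" "teval w V b = B"
    using fresh by (auto simp: g V_def A_def B_def holds_upd_fresh teval_upd_fresh)
  have spells: "holds w v G \<Longrightarrow> spells w A B u"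
    using ok by (simp add: g A_def B_def)
  show ?thesis
  proof (cases u rule: word_cases)
    case 1
    then show ?thesis
      using spells fixed by (auto simp: g V_def spells_Nil)
  next
    case (2 c)
    have "A < X \<and> X < B \<and> B \<le> length w \<and> w ! (X - 1) = c \<and> X = A + 1 \<and> B = X + 1"
      if G: "holds w v G"
    proof -
      have X: "X = A + length ([] :: bool list) + 1"
        using XY G by (simp add: g 2 A_def)
      have "spells w A B ([] @ c # [])"
        using spells[OF G] 2 by simp
      then have "spells w A X [] \<and> w ! (X - 1) = c \<and> spells w X B []"
        by (simp only: spells_append_Cons[OF X])
      then show ?thesis
        using X by (auto simp: spells_Nil)
    qed
    moreover have "V (3*j) = X" "V (Suc (Suc (3*j))) = Z"
      by (simp_all add: V_def)
    ultimately show ?thesis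
      using fixed by (auto simp: g 2 Let_def)
  next
    case (3 c d r)
    obtain u1 c1 u2 c2 u3 where p: "pieces (3^j - 1) (c # d # r) = (u1, c1, u2, c2, u3)"
      by (metis prod_cases5)
    have "holds w V (fst (split_long j G a b u1 c1 u2 c2 u3)) \<and>
        (\<forall>g'\<in>set (snd (split_long j G a b u1 c1 u2 c2 u3)). gap_holds w V g')"
      unfolding V_def
      by (rule split_long_complete)
        (use fresh spells XY pieces_append[OF _ p] p in \<open>auto simp: g 3 A_def B_def\<close>)
    then show ?thesis
      using p by (simp add: g 3)
  qed
qed

lemma split_points_in_range:
  assumes "gap_holds w v g" "holds w v (gap_guard g)" "split_points j w v g = (X, Y)"
  shows "X \<in> {1..length w}" "Y \<in> {1..length w}"
proof -
  obtain G a b u where g: "g = Gap G a b u"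
    by (cases g)
  define A B where "A = teval w v a" and "B = teval w v b"
  have spells: "spells w A B u" and n: "B \<le> length w"
    using assms by (auto simp: g A_def B_def spells_def)
  have "A < X \<and> X \<le> Y \<and> Y \<le> B"
  proof (cases u rule: word_cases)
    case (3 c d r)
    obtain u1 c1 u2 c2 u3 where p: "pieces (3^j - 1) (c # d # r) = (u1, c1, u2, c2, u3)"
      by (metis prod_cases5)
    then have "X = A + length u1 + 1" "Y = X + length u2 + 1" "u = u1 @ c1 # u2 @ c2 # u3"
      using assms(3) pieces_append[OF _ p] by (auto simp: g 3 A_def)
    then show ?thesis
      using spells_length[OF spells] by simp
  qed (use assms(3) spells_length[OF spells] in \<open>auto simp: g A_def\<close>)
  then show "X \<in> {1..length w}" "Y \<in> {1..length w}"
    using n by auto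
qed

definition guards_exclusive :: "bool list \<Rightarrow> (nat \<Rightarrow> nat) \<Rightarrow> gap list \<Rightarrow> bool" where
  "guards_exclusive w v gs \<longleftrightarrow>
    (\<forall>g\<in>set gs. \<forall>g'\<in>set gs. holds w v (gap_guard g) \<longrightarrow> holds w v (gap_guard g') \<longrightarrow> g = g')"

lemma blocks_fm_complete:
  "\<forall>x. v x \<in> {1..length w} \<Longrightarrow> vars_at_least (3 * j) gs acc \<Longrightarrow> holds w v acc \<Longrightarrow>
    \<forall>g\<in>set gs. gap_holds w v g \<and> length (gap_word g) < 3 ^ j \<and> (gap_word g = [] \<longrightarrow> 0 < j) \<Longrightarrow>
    guards_exclusive w v gs \<Longrightarrow> holds w v (blocks_fm j gs acc)"
proof (induction j arbitrary: v gs acc)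
  case 0
  then have "gs = []"
    by (cases gs) auto
  then show ?case
    using 0 by simp
next
  case (Suc j)
  obtain X Y where XY: "X \<in> {1..length w}" "Y \<in> {1..length w}"
    and choice: "\<forall>g\<in>set gs. holds w v (gap_guard g) \<longrightarrow> (X, Y) = split_points j w v g"
  proof (cases "\<exists>g\<in>set gs. holds w v (gap_guard g)")
    case True
    then obtain g where g: "g \<in> set gs" "holds w v (gap_guard g)"
      by blast
    obtain X Y where XY: "split_points j w v g = (X, Y)"
      by fastforce
    show thesis
      by (rule that[of X Y])
        (use split_points_in_range[OF _ g(2) XY] Suc.prems(4,5) g XY in \<open>auto simp: guards_exclusive_def\<close>)
  next
    case False
    then show thesis
      by (intro that[of 1 1]) (use Suc.prems(1) in auto)
  qed
  have "holds w (v(3*j := X, 3*j+1 := Y, 3*j+2 := Z)) (blocks_fm j (sub_gaps j gs) (And acc (split_matrix j gs)))"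
    if Z: "Z \<in> {1..length w}" for Z
  proof (rule Suc.IH)
    let ?V = "v(3*j := X, 3*j+1 := Y, 3*j+2 := Z)"
    have fresh: "gap_vars g \<inter> {3*j, 3*j+1, 3*j+2} = {}" if "g \<in> set gs" for g
      using vars_at_least_block_fresh(2)[OF Suc.prems(2) that] .
    have guard: "holds w ?V (gap_guard g) = holds w v (gap_guard g)" if "g \<in> set gs" for g
      using fresh[OF that] free_gap_guard[of g] by (intro holds_upd_fresh) blast
    have split: "holds w ?V (fst (split_gap j g)) \<and> (\<forall>g'\<in>set (snd (split_gap j g)). gap_holds w ?V g')"
      if "g \<in> set gs" for g
      using split_gap_complete[OF fresh[OF that]] Suc.prems(4) choice that by blast
    show "\<forall>x. ?V x \<in> {1..length w}"
      using Suc.prems(1) XY Z by auto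
    show "vars_at_least (3 * j) (sub_gaps j gs) (And acc (split_matrix j gs))"
      by (rule vars_at_least_sub_gaps[OF Suc.prems(2)])
    show "holds w ?V (And acc (split_matrix j gs))"
      using split Suc.prems(3) holds_upd_fresh[OF vars_at_least_block_fresh(1)[OF Suc.prems(2)]]
      by (auto simp: split_matrix_def)
    show "\<forall>g'\<in>set (sub_gaps j gs). gap_holds w ?V g' \<and> length (gap_word g') < 3 ^ j \<and> (gap_word g' = [] \<longrightarrow> 0 < j)"
      using split split_gap_children(1,2) Suc.prems(4) by (fastforce simp: sub_gaps_def)
    show "guards_exclusive w ?V (sub_gaps j gs)"
      unfolding guards_exclusive_def
    proof (intro ballI impI)
      fix g1' g2'
      assume "g1' \<in> set (sub_gaps j gs)" "g2' \<in> set (sub_gaps j gs)"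
        and active: "holds w ?V (gap_guard g1')" "holds w ?V (gap_guard g2')"
      then obtain g1 g2 where g: "g1 \<in> set gs" "g1' \<in> set (snd (split_gap j g1))"
          "g2 \<in> set gs" "g2' \<in> set (snd (split_gap j g2))"
        by (auto simp: sub_gaps_def)
      have "holds w v (gap_guard g1)" "holds w v (gap_guard g2)"
        using split_gap_children(3)[OF g(2) active(1)] split_gap_children(3)[OF g(4) active(2)] guard g by auto
      then have "g1 = g2"
        using Suc.prems(5) g by (auto simp: guards_exclusive_def)
      then show "g1' = g2'"
        using split_gap_children_exclusive g active by blast
    qed
  qed
  then show ?case
    using XY unfolding blocks_fm.simps holds.simps by blast
qed

section \<open>The defining sentence of a string\<close>

lemma three_pow_log_ceiling:
  assumes "1 \<le> n"
  shows "n \<le> 3 ^ nat \<lceil>log 3 (real n)\<rceil>" "2 \<le> n \<Longrightarrow> 0 < nat \<lceil>log 3 (real n)\<rceil>"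
proof -
  have "real n \<le> 3 ^ nat \<lceil>log 3 (real n)\<rceil>"
    by (rule power_of_nat_log_ge) (use assms in simp)
  then show "n \<le> 3 ^ nat \<lceil>log 3 (real n)\<rceil>"
    by (metis of_nat_le_iff of_nat_numeral of_nat_power)
  assume "2 \<le> n"
  then have "0 < log 3 (real n)"
    by simp
  then show "0 < nat \<lceil>log 3 (real n)\<rceil>"
    by linarith
qed

definition string_fm :: "bool list \<Rightarrow> fm" where
  "string_fm w = blocks_fm (nat \<lceil>log 3 (real (length w))\<rceil>)
    (if 2 \<le> length w then [Gap FTrue Min Max (butlast (tl w))] else [])
    (And (Letter (hd w) Min) (Letter (last w) Max))"

lemma string_fm_prenex:
  "prenex_with_prefix (concat (replicate (nat \<lceil>log 3 (real (length w))\<rceil>) [True, True, False])) (string_fm w)"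
  unfolding string_fm_def by (rule blocks_fm_prenex) auto

lemma string_fm_sentence: "sentence (string_fm w)"
  using blocks_fm_free unfolding sentence_def string_fm_def by fastforce

lemma models_string_fm:
  assumes "w \<noteq> []" "length w' = length w"
  shows "models w' (string_fm w) \<longleftrightarrow> w' = w"
proof -
  define k where "k = nat \<lceil>log 3 (real (length w))\<rceil>"
  define gs where "gs = (if 2 \<le> length w then [Gap FTrue Min Max (butlast (tl w))] else [])"
  define acc where "acc = And (Letter (hd w) Min) (Letter (last w) Max)"
  have phi: "string_fm w = blocks_fm k gs acc"
    by (simp add: string_fm_def k_def gs_def acc_def)
  have vars: "vars_at_least (3 * k) gs acc"
    by (simp add: vars_at_least_def gs_def acc_def)
  have ends: "holds u (\<lambda>_. 1) acc \<longleftrightarrow> hd u = hd w \<and> last u = last w" if "length u = length w" for u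
  proof -
    have "u \<noteq> []"
      using that assms(1) by auto
    then show ?thesis
      using that assms(1) by (simp add: acc_def hd_conv_nth last_conv_nth Suc_le_eq)
  qed
  have inner: "(\<forall>g\<in>set gs. gap_holds u (\<lambda>_. 1) g) \<longleftrightarrow> butlast (tl w) = butlast (tl u)"
    if "length u = length w" for u
  proof (cases "2 \<le> length w")
    case True
    then show ?thesis
      using spells_inner[of u] that by (simp add: gs_def)
  next
    case False
    then have "butlast (tl u) = []" "butlast (tl w) = []"
      unfolding length_0_conv[symmetric] using that by simp_all
    then show ?thesis
      using False by (simp add: gs_def)
  qed
  show ?thesis
  proof
    assume "models w' (string_fm w)"
    then have "holds w' (\<lambda>_. 1) acc \<and> (\<forall>g\<in>set gs. gap_holds w' (\<lambda>_. 1) g)"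
      unfolding models_def phi using assms vars by (intro blocks_fm_sound) (auto simp: Suc_le_eq)
    then have "hd w' = hd w" "last w' = last w" "butlast (tl w') = butlast (tl w)"
      using ends[OF assms(2)] inner[OF assms(2)] by auto
    moreover have "w' \<noteq> []"
      using assms by auto
    ultimately show "w' = w"
      using list_eq_by_ends assms(2) by blast
  next
    assume "w' = w"
    have gaps: "\<forall>g\<in>set gs. gap_holds w (\<lambda>_. 1) g"
      using inner[of w] by simp
    have "length w \<le> 3 ^ k" "2 \<le> length w \<Longrightarrow> 0 < k"
      using three_pow_log_ceiling[of "length w"] assms(1) by (auto simp: k_def Suc_le_eq)
    moreover have "length (butlast (tl w)) < length w"
      using assms(1) by simp
    ultimately have sizes: "\<forall>g\<in>set gs. length (gap_word g) < 3 ^ k \<and> (gap_word g = [] \<longrightarrow> 0 < k)"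
      by (simp add: gs_def)
    have "holds w (\<lambda>_. 1) (blocks_fm k gs acc)"
      using gaps sizes ends[of w] assms(1) by (intro blocks_fm_complete[OF _ vars]) (auto simp: guards_exclusive_def gs_def Suc_le_eq)
    then show "models w' (string_fm w)"
      unfolding models_def phi \<open>w' = w\<close> .
  qed
qed

theorem mainTheorem9:
  fixes n :: nat and w :: "bool list"
  assumes "n \<ge> 1" and "length w = n"
  shows "\<exists>phi. sentence phi
    \<and> prenex_with_prefix (concat (replicate (nat \<lceil>log 3 (real n)\<rceil>) [True, True, False])) phi
    \<and> nquant phi = 3 * nat \<lceil>log 3 (real n)\<rceil>
    \<and> models w phi
    \<and> (\<forall>w'. length w' = n \<and> w' \<noteq> w \<longrightarrow> \<not> models w' phi)"
proof (intro exI conjI)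
  show prefix: "prenex_with_prefix (concat (replicate (nat \<lceil>log 3 (real n)\<rceil>) [True, True, False])) (string_fm w)"
    using string_fm_prenex[of w] assms(2) by simp
  show "nquant (string_fm w) = 3 * nat \<lceil>log 3 (real n)\<rceil>"
    using nquant_prenex[OF prefix] by (simp add: length_concat sum_list_replicate)
  show "sentence (string_fm w)"
    by (rule string_fm_sentence)
  have "w \<noteq> []"
    using assms by auto
  then show "models w (string_fm w)" "\<forall>w'. length w' = n \<and> w' \<noteq> w \<longrightarrow> \<not> models w' (string_fm w)"
    using models_string_fm assms(2) by auto
qed

end
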